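(* Let $(P,\mathcal C,\varepsilon)$ be a chained projection category. Define $\mathbf S(P,\mathcal C,\varepsilon)=(S,\star,D,R)$ by $S=\mathcal C$, $D(a)=\mathbf d(a)$, $R(a)=\mathbf r(a)$, and for $a,b\in\mathcal C$, with $p=\mathbf r(a)$, $q=\mathbf d(b)$, $p'=q\delta_p$, $q'=p\theta_q$, $$a\star b=a\rfloor_{p'}\circ\varepsilon[p',q']\circ{}_{q'}\lfloor b.$$ Then $\mathbf S(P,\mathcal C,\varepsilon)$ is a DRC-semigroup.
   Context: (The product is well defined since $p'\le p$, $q'\le q$ and $p'\,\mathscr F\,q'$.) \textbf{DRC-semigroups.} A DRC-semigroup is an algebra $(S,\cdot,D,R)$ with $(S,\cdot)$ a semigroup and unary $D,R$ satisfying, for all $a,b$: $D(a)a=a$, $aR(a)=a$; $D(ab)=D(aD(b))$, $R(ab)=R(R(a)b)$; $D(ab)=D(a)D(ab)D(a)$, $R(ab)=R(b)R(ab)R(b)$; $R(D(a))=D(a)$, $D(R(a))=R(a)$. \textbf{Projection algebras.} Maps are written on the right and composed left to right. A projection algebra is a set $P$ with maps $\theta_p,\delta_p:P\to P$ ($p\in P$) such that for all $p,q$: $p\theta_p=p$, $p\delta_p=p$; $p\theta_{q\theta_p}=q\theta_p$, $p\delta_{q\delta_p}=q\delta_p$; $\theta_q\theta_{q\theta_p}=\theta_q\theta_p$, $\delta_q\delta_{q\delta_p}=\delta_q\delta_p$; $\theta_p\delta_p=\theta_p$, $\delta_p\theta_p=\delta_p$; $\theta_{p\delta_q}\theta_p=\theta_q\theta_p$,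 $\delta_{p\theta_q}\delta_p=\delta_q\delta_p$. Order: $p\le q\iff p=p\theta_q$. Relation: $p\,\mathscr F\,q\iff p=q\delta_p$ and $q=p\theta_q$. \textbf{Biordered categories.} A small category is identified with its morphisms, objects with identities ($v\mathcal C$); $\mathbf d,\mathbf r$ are domain/codomain and $a\circ b$ is defined iff $\mathbf r(a)=\mathbf d(b)$. A left-ordered category is $(\mathcal C,\le)$, $\le$ a partial order with: $a\le b\Rightarrow\mathbf d(a)\le\mathbf d(b),\mathbf r(a)\le\mathbf r(b)$; $a\le b$, $c\le c'$ with $a\circ c$, $b\circ c'$ defined $\Rightarrow a\circ c\le b\circ c'$; for each object $p\le\mathbf d(a)$ a unique $u\le a$ with $\mathbf d(u)=p$ (denoted ${}_p\lfloor a$). Right-ordered: dually, a unique $v\le a$ with $\mathbf r(v)=q$ for each object $q\le\mathbf r(a)$ (denoted $a\rfloor_q$). A biordered category $(\mathcal C,\le_l,\le_r)$ is left-ordered under $\le_l$, right-ordered under $\le_r$, with $\le_l,\le_r$ equal on $v\mathcal C$. Biordered morphisms are functors preserving both orders. $t^\downarrow=\{s:s\le t\}$; $\mathcal C(q,r)=\{a:\mathbf d(a)=q,\mathbf r(a)=r\}$. \textbf{Projection categories.} A weak projection category $(P,\mathcal C)$: $\mathcal C$ biordered, $P=v\mathcal C$ a projection algebra whose order equals the restriction of $\le_l$ and of $\le_r$. For $a\in\mathcal C$: $p\vartheta_a=\mathbf r({}_p\lfloor a)$ for $p\le\mathbf d(a)$; $q\vartheta'_a=\mathbf d(a\rfloor_q)$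 for $q\le\mathbf r(a)$; $\Theta_a=\theta_{\mathbf d(a)}\vartheta_a$, $\Delta_a=\delta_{\mathbf r(a)}\vartheta'_a$ (maps $P\to P$). A projection category also satisfies (C1): $\Theta_{a\rfloor_q}=\Theta_a\theta_q$, $\Delta_{{}_p\lfloor a}=\Delta_a\delta_p$ for $p\le\mathbf d(a)$, $q\le\mathbf r(a)$. \textbf{Chain category.} Paths: tuples $(p_1,\dots,p_k)$ with $p_1\mathscr F\cdots\mathscr F p_k$, $\mathbf d=p_1$, $\mathbf r=p_k$, composition $(p_1,\dots,p_k)\circ(p_k,\dots,p_l)=(p_1,\dots,p_l)$; restrictions ${}_q\lfloor(p_1,\dots,p_k)=(q_1,\dots,q_k)$, $q_1=q\le p_1$, $q_i=q_{i-1}\theta_{p_i}$; $(p_1,\dots,p_k)\rfloor_r=(r_1,\dots,r_k)$, $r_k=r\le p_k$, $r_i=r_{i+1}\delta_{p_i}$. The chain category $\mathcal C(P)$ is the quotient of this (biordered) path category by the congruence generated by $(p,p)\approx(p)$, with elements $[p_1,\dots,p_k]$, objects $P$, and restrictions computed on representatives. \textbf{Chained projection categories.} An evaluation map is a biordered functor $\varepsilon:\mathcal C(P)\to\mathcal C$ with $\varepsilon[p]=p$. For $b\in\mathcal C(q,r)$, $p,s\in P$, let $e=s\Delta_b\delta_p$, $e_1=s\Delta_b\delta_{p\theta_q}$, $e_2=p\theta_{s\Delta_b}$, $f=p\Theta_b\theta_s$, $f_1=s\delta_{p\Theta_b}$, $f_2=p\Theta_b\theta_{s\delta_r}$ (the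 following are then defined), $\lambda(p,b,s)=\varepsilon[e,e_1]\circ({}_{p\theta_q}\lfloor b)\rfloor_{f_1}\circ\varepsilon[f_1,f]$, $\rho(p,b,s)=\varepsilon[e,e_2]\circ{}_{e_2}\lfloor(b\rfloor_{s\delta_r})\circ\varepsilon[f_2,f]$. A chained projection category is a triple $(P,\mathcal C,\varepsilon)$ with $(P,\mathcal C)$ a projection category, $\varepsilon$ an evaluation map, and (C2) $\lambda(p,b,s)=\rho(p,b,s)$ for all $b\in\mathcal C$, $p,s\in P$. *)

theory Defs
  imports Main
begin

text \<open>A small category is identified with its set of morphisms; objects are the
identities.  Composition is diagrammatic: comp a b is defined iff cod a = dom b.
Maps of projection algebras are written on the right in the paper; here
theta p x stands for x theta_p, and delta p x stands for x delta_p.\<close>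

record 'm cpc =
  Mor   :: "'m set"
  Dom   :: "'m \<Rightarrow> 'm"
  Cod   :: "'m \<Rightarrow> 'm"
  Comp  :: "'m \<Rightarrow> 'm \<Rightarrow> 'm"
  LeL   :: "'m \<Rightarrow> 'm \<Rightarrow> bool"
  LeR   :: "'m \<Rightarrow> 'm \<Rightarrow> bool"
  Theta :: "'m \<Rightarrow> 'm \<Rightarrow> 'm"
  Delta :: "'m \<Rightarrow> 'm \<Rightarrow> 'm"
  Eps   :: "'m list \<Rightarrow> 'm"

definition Obj :: "('m, 'z) cpc_scheme \<Rightarrow> 'm set" where
  "Obj K = {a \<in> Mor K. Dom K a = a}"

definition is_category :: "('m, 'z) cpc_scheme \<Rightarrow> bool" where
  "is_category K \<longleftrightarrow>
     (\<forall>a\<in>Mor K. Dom K a \<in> Mor K \<and> Cod K a \<in> Mor K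
        \<and> Dom K (Dom K a) = Dom K a \<and> Cod K (Dom K a) = Dom K a
        \<and> Dom K (Cod K a) = Cod K a \<and> Cod K (Cod K a) = Cod K a
        \<and> Comp K (Dom K a) a = a \<and> Comp K a (Cod K a) = a)
   \<and> (\<forall>a\<in>Mor K. \<forall>b\<in>Mor K. Cod K a = Dom K b \<longrightarrow>
        Comp K a b \<in> Mor K \<and> Dom K (Comp K a b) = Dom K a \<and> Cod K (Comp K a b) = Cod K b)
   \<and> (\<forall>a\<in>Mor K. \<forall>b\<in>Mor K. \<forall>c\<in>Mor K. Cod K a = Dom K b \<longrightarrow> Cod K b = Dom K c \<longrightarrow>
        Comp K (Comp K a b) c = Comp K a (Comp K b c))"

definition partial_order_on' :: "'m set \<Rightarrow> ('m \<Rightarrow> 'm \<Rightarrow> bool) \<Rightarrow> bool" where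
  "partial_order_on' A le \<longleftrightarrow>
     (\<forall>a\<in>A. le a a)
   \<and> (\<forall>a\<in>A. \<forall>b\<in>A. le a b \<longrightarrow> le b a \<longrightarrow> a = b)
   \<and> (\<forall>a\<in>A. \<forall>b\<in>A. \<forall>c\<in>A. le a b \<longrightarrow> le b c \<longrightarrow> le a c)"

definition left_ordered :: "('m, 'z) cpc_scheme \<Rightarrow> bool" where
  "left_ordered K \<longleftrightarrow> is_category K \<and> partial_order_on' (Mor K) (LeL K)
   \<and> (\<forall>a\<in>Mor K. \<forall>b\<in>Mor K. LeL K a b \<longrightarrow>
        LeL K (Dom K a) (Dom K b) \<and> LeL K (Cod K a) (Cod K b))
   \<and> (\<forall>a\<in>Mor K. \<forall>b\<in>Mor K. \<forall>c\<in>Mor K. \<forall>c'\<in>Mor K.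
        LeL K a b \<longrightarrow> LeL K c c' \<longrightarrow> Cod K a = Dom K c \<longrightarrow> Cod K b = Dom K c' \<longrightarrow>
        LeL K (Comp K a c) (Comp K b c'))
   \<and> (\<forall>a\<in>Mor K. \<forall>p\<in>Obj K. LeL K p (Dom K a) \<longrightarrow>
        (\<exists>!u. u \<in> Mor K \<and> LeL K u a \<and> Dom K u = p))"

definition right_ordered :: "('m, 'z) cpc_scheme \<Rightarrow> bool" where
  "right_ordered K \<longleftrightarrow> is_category K \<and> partial_order_on' (Mor K) (LeR K)
   \<and> (\<forall>a\<in>Mor K. \<forall>b\<in>Mor K. LeR K a b \<longrightarrow>
        LeR K (Dom K a) (Dom K b) \<and> LeR K (Cod K a) (Cod K b))
   \<and> (\<forall>a\<in>Mor K. \<forall>b\<in>Mor K. \<forall>c\<in>Mor K. \<forall>c'\<in>Mor K.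
        LeR K a b \<longrightarrow> LeR K c c' \<longrightarrow> Cod K a = Dom K c \<longrightarrow> Cod K b = Dom K c' \<longrightarrow>
        LeR K (Comp K a c) (Comp K b c'))
   \<and> (\<forall>a\<in>Mor K. \<forall>q\<in>Obj K. LeR K q (Cod K a) \<longrightarrow>
        (\<exists>!v. v \<in> Mor K \<and> LeR K v a \<and> Cod K v = q))"

definition biordered :: "('m, 'z) cpc_scheme \<Rightarrow> bool" where
  "biordered K \<longleftrightarrow> left_ordered K \<and> right_ordered K
   \<and> (\<forall>p\<in>Obj K. \<forall>q\<in>Obj K. LeL K p q \<longleftrightarrow> LeR K p q)"

text \<open>Restrictions: lrest K p a is the paper's  {}_p\<lfloor> a,  rrest K a q is  a\<rfloor>_q.\<close>

definition lrest :: "('m, 'z) cpc_scheme \<Rightarrow> 'm \<Rightarrow> 'm \<Rightarrow> 'm" where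
  "lrest K p a = (THE u. u \<in> Mor K \<and> LeL K u a \<and> Dom K u = p)"

definition rrest :: "('m, 'z) cpc_scheme \<Rightarrow> 'm \<Rightarrow> 'm \<Rightarrow> 'm" where
  "rrest K a q = (THE v. v \<in> Mor K \<and> LeR K v a \<and> Cod K v = q)"

definition projection_algebra :: "'m set \<Rightarrow> ('m \<Rightarrow> 'm \<Rightarrow> 'm) \<Rightarrow> ('m \<Rightarrow> 'm \<Rightarrow> 'm) \<Rightarrow> bool" where
  "projection_algebra P th de \<longleftrightarrow>
     (\<forall>p\<in>P. \<forall>x\<in>P. th p x \<in> P \<and> de p x \<in> P)
   \<and> (\<forall>p\<in>P. th p p = p \<and> de p p = p)
   \<and> (\<forall>p\<in>P. \<forall>q\<in>P. th (th p q) p = th p q \<and> de (de p q) p = de p q)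
   \<and> (\<forall>p\<in>P. \<forall>q\<in>P. \<forall>x\<in>P. th (th p q) (th q x) = th p (th q x)
                       \<and> de (de p q) (de q x) = de p (de q x))
   \<and> (\<forall>p\<in>P. \<forall>x\<in>P. de p (th p x) = th p x \<and> th p (de p x) = de p x)
   \<and> (\<forall>p\<in>P. \<forall>q\<in>P. \<forall>x\<in>P. th p (th (de q p) x) = th p (th q x)
                       \<and> de p (de (th q p) x) = de p (de q x))"

definition pa_le :: "('m, 'z) cpc_scheme \<Rightarrow> 'm \<Rightarrow> 'm \<Rightarrow> bool" where
  "pa_le K p q \<longleftrightarrow> p = Theta K q p"

definition pa_F :: "('m, 'z) cpc_scheme \<Rightarrow> 'm \<Rightarrow> 'm \<Rightarrow> bool" where
  "pa_F K p q \<longleftrightarrow> p = Delta K p q \<and> q = Theta K q p"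

definition weak_projection_category :: "('m, 'z) cpc_scheme \<Rightarrow> bool" where
  "weak_projection_category K \<longleftrightarrow> biordered K
   \<and> projection_algebra (Obj K) (Theta K) (Delta K)
   \<and> (\<forall>p\<in>Obj K. \<forall>q\<in>Obj K. (pa_le K p q \<longleftrightarrow> LeL K p q) \<and> (pa_le K p q \<longleftrightarrow> LeR K p q))"

definition BigTheta :: "('m, 'z) cpc_scheme \<Rightarrow> 'm \<Rightarrow> 'm \<Rightarrow> 'm" where
  "BigTheta K a x = Cod K (lrest K (Theta K (Dom K a) x) a)"

definition BigDelta :: "('m, 'z) cpc_scheme \<Rightarrow> 'm \<Rightarrow> 'm \<Rightarrow> 'm" where
  "BigDelta K a x = Dom K (rrest K a (Delta K (Cod K a) x))"

definition projection_category :: "('m, 'z) cpc_scheme \<Rightarrow> bool" where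
  "projection_category K \<longleftrightarrow> weak_projection_category K
   \<and> (\<forall>a\<in>Mor K. \<forall>q\<in>Obj K. pa_le K q (Cod K a) \<longrightarrow>
        (\<forall>x\<in>Obj K. BigTheta K (rrest K a q) x = Theta K q (BigTheta K a x)))
   \<and> (\<forall>a\<in>Mor K. \<forall>p\<in>Obj K. pa_le K p (Dom K a) \<longrightarrow>
        (\<forall>x\<in>Obj K. BigDelta K (lrest K p a) x = Delta K p (BigDelta K a x)))"

definition is_path :: "('m, 'z) cpc_scheme \<Rightarrow> 'm list \<Rightarrow> bool" where
  "is_path K w \<longleftrightarrow> w \<noteq> [] \<and> set w \<subseteq> Obj K \<and> successively (pa_F K) w"

fun lrest_path_aux :: "('m, 'z) cpc_scheme \<Rightarrow> 'm \<Rightarrow> 'm list \<Rightarrow> 'm list" where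
  "lrest_path_aux K x [] = []"
| "lrest_path_aux K x (p # ps) = Theta K p x # lrest_path_aux K (Theta K p x) ps"

definition lrest_path :: "('m, 'z) cpc_scheme \<Rightarrow> 'm \<Rightarrow> 'm list \<Rightarrow> 'm list" where
  "lrest_path K q w = q # lrest_path_aux K q (tl w)"

fun rrest_path_aux :: "('m, 'z) cpc_scheme \<Rightarrow> 'm \<Rightarrow> 'm list \<Rightarrow> 'm list" where
  "rrest_path_aux K x [] = []"
| "rrest_path_aux K x (p # ps) = Delta K p x # rrest_path_aux K (Delta K p x) ps"

text \<open>(p_1,...,p_k)\<rfloor>_r = (r_1,...,r_k), r_k = r, r_i = r_{i+1} delta_{p_i}.\<close>
definition rrest_path :: "('m, 'z) cpc_scheme \<Rightarrow> 'm list \<Rightarrow> 'm \<Rightarrow> 'm list" where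
  "rrest_path K w r = rev (r # rrest_path_aux K r (tl (rev w)))"

text \<open>Orders of the path category: w \<le>_l w' iff w is a left restriction of w'
  to some projection below d(w'); dually for \<le>_r.  The orders of the chain
  category are computed on representatives.\<close>

definition path_le_l :: "('m, 'z) cpc_scheme \<Rightarrow> 'm list \<Rightarrow> 'm list \<Rightarrow> bool" where
  "path_le_l K w w' \<longleftrightarrow> (\<exists>p\<in>Obj K. pa_le K p (hd w') \<and> w = lrest_path K p w')"

definition path_le_r :: "('m, 'z) cpc_scheme \<Rightarrow> 'm list \<Rightarrow> 'm list \<Rightarrow> bool" where
  "path_le_r K w w' \<longleftrightarrow> (\<exists>q\<in>Obj K. pa_le K q (last w') \<and> w = rrest_path K w' q)"

text \<open>The congruence on paths generated by (p,p) \<approx> (p): since it must be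
  compatible with composition, it is the equivalence closure of replacing a
  factor (p,p) by (p) anywhere in a path.\<close>

definition dup_step :: "'m list \<Rightarrow> 'm list \<Rightarrow> bool" where
  "dup_step u v \<longleftrightarrow> (\<exists>xs p ys. u = xs @ [p, p] @ ys \<and> v = xs @ [p] @ ys)"

definition chain_equiv :: "'m list \<Rightarrow> 'm list \<Rightarrow> bool" where
  "chain_equiv = (\<lambda>u v. dup_step u v \<or> dup_step v u)\<^sup>*\<^sup>*"

text \<open>An evaluation map \<epsilon> : C(P) \<rightarrow> C is represented by the function Eps K on
  representatives (paths): it must be constant on chain_equiv-classes (so that it
  is a map on the chain category C(P)), a functor, a biordered morphism and satisfy
  \<epsilon>[p] = p.  Eps K [p_1,...,p_k] stands for \<epsilon>[p_1,...,p_k].\<close>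

definition evaluation_map :: "('m, 'z) cpc_scheme \<Rightarrow> bool" where
  "evaluation_map K \<longleftrightarrow>
     (\<forall>w w'. is_path K w \<longrightarrow> is_path K w' \<longrightarrow> chain_equiv w w' \<longrightarrow> Eps K w = Eps K w')
   \<and> (\<forall>w. is_path K w \<longrightarrow> Eps K w \<in> Mor K \<and> Dom K (Eps K w) = hd w \<and> Cod K (Eps K w) = last w)
   \<and> (\<forall>w w'. is_path K w \<longrightarrow> is_path K w' \<longrightarrow> last w = hd w' \<longrightarrow>
        Eps K (w @ tl w') = Comp K (Eps K w) (Eps K w'))
   \<and> (\<forall>w w'. is_path K w \<longrightarrow> is_path K w' \<longrightarrow> path_le_l K w w' \<longrightarrow> LeL K (Eps K w) (Eps K w'))
   \<and> (\<forall>w w'. is_path K w \<longrightarrow> is_path K w' \<longrightarrow> path_le_r K w w' \<longrightarrow> LeR K (Eps K w) (Eps K w'))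
   \<and> (\<forall>p\<in>Obj K. Eps K [p] = p)"

definition lam :: "('m, 'z) cpc_scheme \<Rightarrow> 'm \<Rightarrow> 'm \<Rightarrow> 'm \<Rightarrow> 'm" where
  "lam K p b s =
    (let q = Dom K b; e = Delta K p (BigDelta K b s);
         e1 = Delta K (Theta K q p) (BigDelta K b s);
         f = Theta K s (BigTheta K b p);
         f1 = Delta K (BigTheta K b p) s
     in Comp K (Comp K (Eps K [e, e1]) (rrest K (lrest K (Theta K q p) b) f1)) (Eps K [f1, f]))"

definition rho :: "('m, 'z) cpc_scheme \<Rightarrow> 'm \<Rightarrow> 'm \<Rightarrow> 'm \<Rightarrow> 'm" where
  "rho K p b s =
    (let r = Cod K b; e = Delta K p (BigDelta K b s);
         e2 = Theta K (BigDelta K b s) p;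
         f = Theta K s (BigTheta K b p);
         f2 = Theta K (Delta K r s) (BigTheta K b p)
     in Comp K (Comp K (Eps K [e, e2]) (lrest K e2 (rrest K b (Delta K r s)))) (Eps K [f2, f]))"

definition chained_projection_category :: "('m, 'z) cpc_scheme \<Rightarrow> bool" where
  "chained_projection_category K \<longleftrightarrow> projection_category K \<and> evaluation_map K
   \<and> (\<forall>b\<in>Mor K. \<forall>p\<in>Obj K. \<forall>s\<in>Obj K. lam K p b s = rho K p b s)"

definition star :: "('m, 'z) cpc_scheme \<Rightarrow> 'm \<Rightarrow> 'm \<Rightarrow> 'm" where
  "star K a b =
    (let p = Cod K a; q = Dom K b; p' = Delta K p q; q' = Theta K q p
     in Comp K (Comp K (rrest K a p') (Eps K [p', q'])) (lrest K q' b))"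

definition drc_semigroup :: "'a set \<Rightarrow> ('a \<Rightarrow> 'a \<Rightarrow> 'a) \<Rightarrow> ('a \<Rightarrow> 'a) \<Rightarrow> ('a \<Rightarrow> 'a) \<Rightarrow> bool" where
  "drc_semigroup S m D R \<longleftrightarrow>
     (\<forall>a\<in>S. \<forall>b\<in>S. m a b \<in> S)
   \<and> (\<forall>a\<in>S. D a \<in> S \<and> R a \<in> S)
   \<and> (\<forall>a\<in>S. \<forall>b\<in>S. \<forall>c\<in>S. m (m a b) c = m a (m b c))
   \<and> (\<forall>a\<in>S. m (D a) a = a \<and> m a (R a) = a)
   \<and> (\<forall>a\<in>S. \<forall>b\<in>S. D (m a b) = D (m a (D b)) \<and> R (m a b) = R (m (R a) b))
   \<and> (\<forall>a\<in>S. \<forall>b\<in>S. D (m a b) = m (m (D a) (D (m a b))) (D a)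
                 \<and> R (m a b) = m (m (R b) (R (m a b))) (R b))
   \<and> (\<forall>a\<in>S. R (D a) = D a \<and> D (R a) = R a)"

end

theory Submission
  imports Defs
begin

text \<open>It coincides with
composition when \<open>r(a) = d(b)\<close>, and it absorbs composition on either side:
\<open>(x \<circ> y) \<star> z = x \<star> (y \<star> z)\<close> and \<open>x \<star> (y \<circ> z) = (x \<star> y) \<star> z\<close>.  Writing
\<open>a = a \<circ> r(a)\<close> and \<open>c = d(c) \<circ> c\<close>, these laws and the compatibility of restriction with
composition reduce associativity to triples \<open>(p, b, s)\<close> with \<open>p, s\<close> projections.  There,
(C1) and the order preservation of \<open>\<epsilon>\<close> turn \<open>(p \<star> b) \<star> s\<close> into \<open>\<lambda>(p, b, s)\<close> and
\<open>p \<star> (b \<star> s)\<close> into \<open>\<rho>(p, b, s)\<close>, which agree by (C2).  The other DRC axioms hold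
because \<open>d(a \<star> b) \<le> d(a)\<close>, \<open>r(a \<star> b) \<le> r(b)\<close>, and the product of two comparable
projections is the smaller one.\<close>

locale category =
  fixes K :: "('m, 'z) cpc_scheme"
  assumes category: "is_category K"
begin

lemma dom_in [simp]: "a \<in> Mor K \<Longrightarrow> Dom K a \<in> Mor K"
  and cod_in [simp]: "a \<in> Mor K \<Longrightarrow> Cod K a \<in> Mor K"
  and dom_dom [simp]: "a \<in> Mor K \<Longrightarrow> Dom K (Dom K a) = Dom K a"
  and cod_dom [simp]: "a \<in> Mor K \<Longrightarrow> Cod K (Dom K a) = Dom K a"
  and dom_cod [simp]: "a \<in> Mor K \<Longrightarrow> Dom K (Cod K a) = Cod K a"
  and cod_cod [simp]: "a \<in> Mor K \<Longrightarrow> Cod K (Cod K a) = Cod K a"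
  and comp_dom [simp]: "a \<in> Mor K \<Longrightarrow> Comp K (Dom K a) a = a"
  and comp_cod [simp]: "a \<in> Mor K \<Longrightarrow> Comp K a (Cod K a) = a"
  using category unfolding is_category_def by simp_all

lemma comp_in [simp]: "a \<in> Mor K \<Longrightarrow> b \<in> Mor K \<Longrightarrow> Cod K a = Dom K b \<Longrightarrow> Comp K a b \<in> Mor K"
  and dom_comp [simp]: "a \<in> Mor K \<Longrightarrow> b \<in> Mor K \<Longrightarrow> Cod K a = Dom K b \<Longrightarrow> Dom K (Comp K a b) = Dom K a"
  and cod_comp [simp]: "a \<in> Mor K \<Longrightarrow> b \<in> Mor K \<Longrightarrow> Cod K a = Dom K b \<Longrightarrow> Cod K (Comp K a b) = Cod K b"
  using category unfolding is_category_def by simp_all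

lemma comp_assoc:
  "a \<in> Mor K \<Longrightarrow> b \<in> Mor K \<Longrightarrow> c \<in> Mor K \<Longrightarrow> Cod K a = Dom K b \<Longrightarrow> Cod K b = Dom K c \<Longrightarrow>
   Comp K (Comp K a b) c = Comp K a (Comp K b c)"
  using category unfolding is_category_def by blast

lemma dom_obj [simp]: "a \<in> Mor K \<Longrightarrow> Dom K a \<in> Obj K"
  and cod_obj [simp]: "a \<in> Mor K \<Longrightarrow> Cod K a \<in> Obj K"
  and obj_mor [simp]: "p \<in> Obj K \<Longrightarrow> p \<in> Mor K"
  and obj_dom [simp]: "p \<in> Obj K \<Longrightarrow> Dom K p = p"
  unfolding Obj_def by simp_all

lemma obj_cod [simp]: "p \<in> Obj K \<Longrightarrow> Cod K p = p"
  by (metis cod_dom obj_dom obj_mor)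

lemma comp_ident_left: "a \<in> Mor K \<Longrightarrow> Dom K a = p \<Longrightarrow> Comp K p a = a"
  and comp_ident_right: "a \<in> Mor K \<Longrightarrow> Cod K a = q \<Longrightarrow> Comp K a q = a"
  by auto

lemma comp_obj_self [simp]: "p \<in> Obj K \<Longrightarrow> Comp K p p = p"
  by (metis comp_dom obj_dom obj_mor)

end

locale projection_alg =
  fixes K :: "('m, 'z) cpc_scheme"
  assumes projection_alg: "projection_algebra (Obj K) (Theta K) (Delta K)"
begin

lemma theta_in [simp]: "p \<in> Obj K \<Longrightarrow> x \<in> Obj K \<Longrightarrow> Theta K p x \<in> Obj K"
  and delta_in [simp]: "p \<in> Obj K \<Longrightarrow> x \<in> Obj K \<Longrightarrow> Delta K p x \<in> Obj K"
  and theta_self [simp]: "p \<in> Obj K \<Longrightarrow> Theta K p p = p"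
  and delta_self [simp]: "p \<in> Obj K \<Longrightarrow> Delta K p p = p"
  and theta_theta_self: "p \<in> Obj K \<Longrightarrow> q \<in> Obj K \<Longrightarrow> Theta K (Theta K p q) p = Theta K p q"
  and delta_delta_self: "p \<in> Obj K \<Longrightarrow> q \<in> Obj K \<Longrightarrow> Delta K (Delta K p q) p = Delta K p q"
  and delta_theta [simp]: "p \<in> Obj K \<Longrightarrow> x \<in> Obj K \<Longrightarrow> Delta K p (Theta K p x) = Theta K p x"
  and theta_delta [simp]: "p \<in> Obj K \<Longrightarrow> x \<in> Obj K \<Longrightarrow> Theta K p (Delta K p x) = Delta K p x"
  using projection_alg unfolding projection_algebra_def by simp_all

lemma theta_theta_theta:
    "p \<in> Obj K \<Longrightarrow> q \<in> Obj K \<Longrightarrow> x \<in> Obj K \<Longrightarrow>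
     Theta K (Theta K p q) (Theta K q x) = Theta K p (Theta K q x)"
  and delta_delta_delta:
    "p \<in> Obj K \<Longrightarrow> q \<in> Obj K \<Longrightarrow> x \<in> Obj K \<Longrightarrow>
     Delta K (Delta K p q) (Delta K q x) = Delta K p (Delta K q x)"
  and theta_theta_delta:
    "p \<in> Obj K \<Longrightarrow> q \<in> Obj K \<Longrightarrow> x \<in> Obj K \<Longrightarrow>
     Theta K p (Theta K (Delta K q p) x) = Theta K p (Theta K q x)"
  and delta_delta_theta:
    "p \<in> Obj K \<Longrightarrow> q \<in> Obj K \<Longrightarrow> x \<in> Obj K \<Longrightarrow>
     Delta K p (Delta K (Theta K q p) x) = Delta K p (Delta K q x)"
  using projection_alg unfolding projection_algebra_def by simp_all

lemma theta_idem [simp]: "p \<in> Obj K \<Longrightarrow> x \<in> Obj K \<Longrightarrow> Theta K p (Theta K p x) = Theta K p x"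
  by (metis delta_theta theta_delta theta_in)

lemma delta_idem [simp]: "p \<in> Obj K \<Longrightarrow> x \<in> Obj K \<Longrightarrow> Delta K p (Delta K p x) = Delta K p x"
  by (metis delta_theta theta_delta delta_in)

lemma pa_le_refl: "p \<in> Obj K \<Longrightarrow> pa_le K p p"
  by (simp add: pa_le_def)

lemma pa_le_trans:
  assumes "p \<in> Obj K" "q \<in> Obj K" "r \<in> Obj K" "pa_le K p q" "pa_le K q r"
  shows "pa_le K p r"
  using theta_theta_theta[of r q p] assms unfolding pa_le_def by simp

lemma theta_le: "p \<in> Obj K \<Longrightarrow> x \<in> Obj K \<Longrightarrow> pa_le K (Theta K p x) p"
  by (simp add: pa_le_def)

lemma delta_le: "p \<in> Obj K \<Longrightarrow> x \<in> Obj K \<Longrightarrow> pa_le K (Delta K p x) p"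
  by (simp add: pa_le_def)

lemma theta_eq_if_le: "pa_le K x p \<Longrightarrow> Theta K p x = x"
  by (simp add: pa_le_def)

lemma delta_eq_if_le: "p \<in> Obj K \<Longrightarrow> x \<in> Obj K \<Longrightarrow> pa_le K x p \<Longrightarrow> Delta K p x = x"
  by (metis delta_theta theta_eq_if_le)

lemma theta_below_eq: "p \<in> Obj K \<Longrightarrow> x \<in> Obj K \<Longrightarrow> pa_le K x p \<Longrightarrow> Theta K x p = x"
  by (metis theta_theta_self theta_eq_if_le)

lemma delta_below_eq: "p \<in> Obj K \<Longrightarrow> x \<in> Obj K \<Longrightarrow> pa_le K x p \<Longrightarrow> Delta K x p = x"
  by (metis delta_delta_self delta_eq_if_le)

lemma F_delta_theta:
  assumes p: "p \<in> Obj K" and q: "q \<in> Obj K"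
  shows "pa_F K (Delta K p q) (Theta K q p)"
proof -
  let ?a = "Delta K p q" and ?b = "Theta K q p"
  have bq: "pa_le K ?b q" and ap: "pa_le K ?a p" using theta_le delta_le p q by blast+
  have "Delta K ?a ?b = Delta K ?a (Delta K q ?b)" using delta_eq_if_le bq p q by simp
  also have "\<dots> = Delta K p ?b" using delta_delta_delta[of p q ?b] delta_eq_if_le bq p q by simp
  also have "\<dots> = Delta K p (Delta K ?b q)" using delta_below_eq bq p q by simp
  also have "\<dots> = ?a" using delta_delta_theta[of p q q] p q by simp
  finally have a: "?a = Delta K ?a ?b" by simp
  have "Theta K ?b ?a = Theta K ?b (Theta K p ?a)" using theta_eq_if_le ap by simp
  also have "\<dots> = Theta K q ?a" using theta_theta_theta[of q p ?a] theta_eq_if_le ap p q by simp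
  also have "\<dots> = Theta K q (Theta K ?a p)" using theta_below_eq ap p q by simp
  also have "\<dots> = ?b" using theta_theta_delta[of q p p] p q by simp
  finally show ?thesis using a unfolding pa_F_def by simp
qed

lemma F_restrict_right:
  assumes p: "p \<in> Obj K" and q: "q \<in> Obj K" and y: "y \<in> Obj K"
    and F: "pa_F K p q" and yq: "pa_le K y q"
  shows "pa_F K (Delta K p y) y"
proof -
  have "Theta K y (Delta K p y) = Theta K y (Theta K (Delta K p y) p)"
    using theta_below_eq[of p "Delta K p y"] delta_le p y by simp
  also have "\<dots> = Theta K y (Theta K (Delta K q y) p)"
    using theta_theta_delta[of y p p] theta_theta_delta[of y q p] delta_eq_if_le[of q y] p q y yq
    by simp
  also have "\<dots> = Theta K y q" using theta_theta_delta[of y q p] F p q y unfolding pa_F_def by simp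
  also have "\<dots> = y" using theta_below_eq q y yq by simp
  finally show ?thesis using delta_delta_delta[of p y y] p y unfolding pa_F_def by simp
qed

lemma F_restrict_left:
  assumes p: "p \<in> Obj K" and q: "q \<in> Obj K" and x: "x \<in> Obj K"
    and F: "pa_F K p q" and xp: "pa_le K x p"
  shows "pa_F K x (Theta K q x)"
proof -
  have "Delta K x (Theta K q x) = Delta K x (Delta K (Theta K q x) q)"
    using delta_below_eq[of q "Theta K q x"] theta_le q x by simp
  also have "\<dots> = Delta K x (Delta K (Theta K p x) q)"
    using delta_delta_theta[of x q q] delta_delta_theta[of x p q] theta_eq_if_le[of x p] p q x xp
    by simp
  also have "\<dots> = Delta K x p" using delta_delta_theta[of x p q] F p q x unfolding pa_F_def by simp
  also have "\<dots> = x" using delta_below_eq p x xp by simp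
  finally show ?thesis using theta_theta_theta[of q x x] q x unfolding pa_F_def by simp
qed

text \<open>These identify the end points of \<open>\<lambda>(p, b, s)\<close> and \<open>\<rho>(p, b, s)\<close> with those of the
restricted factors of \<open>p \<star> b\<close> and \<open>b \<star> s\<close>.\<close>

lemma delta_via_F_pair:
  assumes p: "p \<in> Obj K" and q: "q \<in> Obj K" and x: "x \<in> Obj K" and xq: "pa_le K x q"
  shows "Delta K (Delta K p q) (Delta K (Theta K q p) x) = Delta K p x"
proof -
  let ?y = "Delta K (Theta K q p) x"
  have y: "?y \<in> Obj K" using p q x by simp
  have "pa_le K ?y q" using pa_le_trans[of ?y "Theta K q p" q] delta_le theta_le p q x y by simp
  then have yy: "Delta K q ?y = ?y" using delta_eq_if_le q y by blast
  have "Delta K (Delta K p q) ?y = Delta K p ?y"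
    using delta_delta_delta[of p q ?y] p q y yy by simp
  also have "\<dots> = Delta K p x" using delta_delta_theta delta_eq_if_le p q x xq by simp
  finally show ?thesis .
qed

lemma theta_via_F_pair:
  assumes r: "r \<in> Obj K" and s: "s \<in> Obj K" and u: "u \<in> Obj K" and ur: "pa_le K u r"
  shows "Theta K (Theta K s r) (Theta K (Delta K r s) u) = Theta K s u"
proof -
  let ?y = "Theta K (Delta K r s) u"
  have y: "?y \<in> Obj K" using r s u by simp
  have "pa_le K ?y r" using pa_le_trans[of ?y "Delta K r s" r] delta_le theta_le r s u y by simp
  then have yy: "Theta K r ?y = ?y" using theta_eq_if_le by blast
  have "Theta K (Theta K s r) ?y = Theta K s ?y"
    using theta_theta_theta[of s r ?y] r s y yy by simp
  also have "\<dots> = Theta K s u" using theta_theta_delta theta_eq_if_le r s u ur by simp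
  finally show ?thesis .
qed

end

locale weak_projection_cat =
  fixes K :: "('m, 'z) cpc_scheme"
  assumes weak_projection: "weak_projection_category K"

sublocale weak_projection_cat \<subseteq> category
  using weak_projection
  unfolding weak_projection_category_def biordered_def left_ordered_def
  by unfold_locales (elim conjE)

sublocale weak_projection_cat \<subseteq> projection_alg
  using weak_projection unfolding weak_projection_category_def by unfold_locales (elim conjE)

context weak_projection_cat
begin

lemma left_ordered: "left_ordered K"
  and right_ordered: "right_ordered K"
  using weak_projection unfolding weak_projection_category_def biordered_def by simp_all

lemma pa_le_iff_LeL: "p \<in> Obj K \<Longrightarrow> q \<in> Obj K \<Longrightarrow> pa_le K p q \<longleftrightarrow> LeL K p q"
  and pa_le_iff_LeR: "p \<in> Obj K \<Longrightarrow> q \<in> Obj K \<Longrightarrow> pa_le K p q \<longleftrightarrow> LeR K p q"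
  using weak_projection unfolding weak_projection_category_def by blast+

lemma LeL_refl: "a \<in> Mor K \<Longrightarrow> LeL K a a"
  using left_ordered unfolding left_ordered_def partial_order_on'_def by simp

lemma LeR_refl: "a \<in> Mor K \<Longrightarrow> LeR K a a"
  using right_ordered unfolding right_ordered_def partial_order_on'_def by simp

lemma LeL_trans: "a \<in> Mor K \<Longrightarrow> b \<in> Mor K \<Longrightarrow> c \<in> Mor K \<Longrightarrow> LeL K a b \<Longrightarrow> LeL K b c \<Longrightarrow> LeL K a c"
  using left_ordered unfolding left_ordered_def partial_order_on'_def by (elim conjE) blast

lemma LeR_trans: "a \<in> Mor K \<Longrightarrow> b \<in> Mor K \<Longrightarrow> c \<in> Mor K \<Longrightarrow> LeR K a b \<Longrightarrow> LeR K b c \<Longrightarrow> LeR K a c"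
  using right_ordered unfolding right_ordered_def partial_order_on'_def by (elim conjE) blast

lemma LeL_dom: "a \<in> Mor K \<Longrightarrow> b \<in> Mor K \<Longrightarrow> LeL K a b \<Longrightarrow> LeL K (Dom K a) (Dom K b)"
  and LeL_cod: "a \<in> Mor K \<Longrightarrow> b \<in> Mor K \<Longrightarrow> LeL K a b \<Longrightarrow> LeL K (Cod K a) (Cod K b)"
  using left_ordered unfolding left_ordered_def by simp_all

lemma LeR_dom: "a \<in> Mor K \<Longrightarrow> b \<in> Mor K \<Longrightarrow> LeR K a b \<Longrightarrow> LeR K (Dom K a) (Dom K b)"
  and LeR_cod: "a \<in> Mor K \<Longrightarrow> b \<in> Mor K \<Longrightarrow> LeR K a b \<Longrightarrow> LeR K (Cod K a) (Cod K b)"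
  using right_ordered unfolding right_ordered_def by simp_all

lemma LeL_comp:
  "a \<in> Mor K \<Longrightarrow> b \<in> Mor K \<Longrightarrow> c \<in> Mor K \<Longrightarrow> c' \<in> Mor K \<Longrightarrow> LeL K a b \<Longrightarrow> LeL K c c' \<Longrightarrow>
   Cod K a = Dom K c \<Longrightarrow> Cod K b = Dom K c' \<Longrightarrow> LeL K (Comp K a c) (Comp K b c')"
  using left_ordered unfolding left_ordered_def by simp

lemma LeR_comp:
  "a \<in> Mor K \<Longrightarrow> b \<in> Mor K \<Longrightarrow> c \<in> Mor K \<Longrightarrow> c' \<in> Mor K \<Longrightarrow> LeR K a b \<Longrightarrow> LeR K c c' \<Longrightarrow>
   Cod K a = Dom K c \<Longrightarrow> Cod K b = Dom K c' \<Longrightarrow> LeR K (Comp K a c) (Comp K b c')"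
  using right_ordered unfolding right_ordered_def by simp

lemma lrest_ex1:
  "a \<in> Mor K \<Longrightarrow> p \<in> Obj K \<Longrightarrow> pa_le K p (Dom K a) \<Longrightarrow> \<exists>!u. u \<in> Mor K \<and> LeL K u a \<and> Dom K u = p"
  using left_ordered pa_le_iff_LeL unfolding left_ordered_def by simp

lemma rrest_ex1:
  "a \<in> Mor K \<Longrightarrow> q \<in> Obj K \<Longrightarrow> pa_le K q (Cod K a) \<Longrightarrow> \<exists>!v. v \<in> Mor K \<and> LeR K v a \<and> Cod K v = q"
  using right_ordered pa_le_iff_LeR unfolding right_ordered_def by simp

lemma lrest:
  assumes "a \<in> Mor K" "p \<in> Obj K" "pa_le K p (Dom K a)"
  shows lrest_in [simp]: "lrest K p a \<in> Mor K"
    and lrest_LeL: "LeL K (lrest K p a) a"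
    and dom_lrest [simp]: "Dom K (lrest K p a) = p"
  using theI'[OF lrest_ex1[OF assms]] unfolding lrest_def by simp_all

lemma rrest:
  assumes "a \<in> Mor K" "q \<in> Obj K" "pa_le K q (Cod K a)"
  shows rrest_in [simp]: "rrest K a q \<in> Mor K"
    and rrest_LeR: "LeR K (rrest K a q) a"
    and cod_rrest [simp]: "Cod K (rrest K a q) = q"
  using theI'[OF rrest_ex1[OF assms]] unfolding rrest_def by simp_all

lemma lrest_unique:
  assumes "a \<in> Mor K" "u \<in> Mor K" "LeL K u a" "Dom K u = p"
  shows "lrest K p a = u"
proof -
  have "p \<in> Obj K" "pa_le K p (Dom K a)"
    using assms LeL_dom[of u a] pa_le_iff_LeL[of p "Dom K a"] by auto
  then show ?thesis
    unfolding lrest_def using the1_equality[OF lrest_ex1[OF assms(1)]] assms by blast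
qed

lemma rrest_unique:
  assumes "a \<in> Mor K" "v \<in> Mor K" "LeR K v a" "Cod K v = q"
  shows "rrest K a q = v"
proof -
  have "q \<in> Obj K" "pa_le K q (Cod K a)"
    using assms LeR_cod[of v a] pa_le_iff_LeR[of q "Cod K a"] by auto
  then show ?thesis
    unfolding rrest_def using the1_equality[OF rrest_ex1[OF assms(1)]] assms by blast
qed

lemma cod_lrest_le:
  "a \<in> Mor K \<Longrightarrow> p \<in> Obj K \<Longrightarrow> pa_le K p (Dom K a) \<Longrightarrow> pa_le K (Cod K (lrest K p a)) (Cod K a)"
  using LeL_cod[of "lrest K p a" a] lrest_LeL pa_le_iff_LeL by simp

lemma dom_rrest_le:
  "a \<in> Mor K \<Longrightarrow> q \<in> Obj K \<Longrightarrow> pa_le K q (Cod K a) \<Longrightarrow> pa_le K (Dom K (rrest K a q)) (Dom K a)"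
  using LeR_dom[of "rrest K a q" a] rrest_LeR pa_le_iff_LeR by simp

lemma lrest_dom [simp]: "a \<in> Mor K \<Longrightarrow> lrest K (Dom K a) a = a"
  by (rule lrest_unique) (simp_all add: LeL_refl)

lemma rrest_cod [simp]: "a \<in> Mor K \<Longrightarrow> rrest K a (Cod K a) = a"
  by (rule rrest_unique) (simp_all add: LeR_refl)

lemma lrest_obj: "q \<in> Obj K \<Longrightarrow> p \<in> Obj K \<Longrightarrow> pa_le K p q \<Longrightarrow> lrest K p q = p"
  by (rule lrest_unique) (simp_all add: pa_le_iff_LeL)

lemma rrest_obj: "q \<in> Obj K \<Longrightarrow> p \<in> Obj K \<Longrightarrow> pa_le K p q \<Longrightarrow> rrest K q p = p"
  by (rule rrest_unique) (simp_all add: pa_le_iff_LeR)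

lemma lrest_lrest:
  assumes a: "a \<in> Mor K" and p: "p \<in> Obj K" "p' \<in> Obj K" "pa_le K p p'" "pa_le K p' (Dom K a)"
  shows "lrest K p (lrest K p' a) = lrest K p a"
proof (rule lrest_unique[OF a, symmetric])
  show "LeL K (lrest K p (lrest K p' a)) a"
    using LeL_trans lrest_LeL lrest_in dom_lrest a p by metis
qed (use a p in simp_all)

lemma rrest_rrest:
  assumes a: "a \<in> Mor K" and q: "q \<in> Obj K" "q' \<in> Obj K" "pa_le K q q'" "pa_le K q' (Cod K a)"
  shows "rrest K (rrest K a q') q = rrest K a q"
proof (rule rrest_unique[OF a, symmetric])
  show "LeR K (rrest K (rrest K a q') q) a"
    using LeR_trans rrest_LeR rrest_in cod_rrest a q by metis
qed (use a q in simp_all)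

lemma lrest_comp:
  assumes a: "a \<in> Mor K" and b: "b \<in> Mor K" and ab: "Cod K a = Dom K b"
    and p: "p \<in> Obj K" "pa_le K p (Dom K a)"
  shows "lrest K p (Comp K a b) = Comp K (lrest K p a) (lrest K (Cod K (lrest K p a)) b)"
proof -
  let ?u = "lrest K p a"
  have le: "pa_le K (Cod K ?u) (Dom K b)" using cod_lrest_le[OF a p] ab by simp
  have "LeL K (Comp K ?u (lrest K (Cod K ?u) b)) (Comp K a b)"
    using LeL_comp lrest_LeL le a b ab p by simp
  then show ?thesis using le a b ab p by (intro lrest_unique) simp_all
qed

lemma rrest_comp:
  assumes a: "a \<in> Mor K" and b: "b \<in> Mor K" and ab: "Cod K a = Dom K b"
    and q: "q \<in> Obj K" "pa_le K q (Cod K b)"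
  shows "rrest K (Comp K a b) q = Comp K (rrest K a (Dom K (rrest K b q))) (rrest K b q)"
proof -
  let ?v = "rrest K b q"
  have le: "pa_le K (Dom K ?v) (Cod K a)" using dom_rrest_le[OF b q] ab by simp
  have "LeR K (Comp K (rrest K a (Dom K ?v)) ?v) (Comp K a b)"
    using LeR_comp rrest_LeR le a b ab q by simp
  then show ?thesis using le a b ab q by (intro rrest_unique) simp_all
qed

end

locale evaluated_weak_projection_cat = weak_projection_cat +
  assumes evaluation: "evaluation_map K"
begin

lemma Eps_pair:
  assumes "x \<in> Obj K" "y \<in> Obj K" "pa_F K x y"
  shows Eps_pair_in [simp]: "Eps K [x, y] \<in> Mor K"
    and dom_Eps_pair [simp]: "Dom K (Eps K [x, y]) = x"
    and cod_Eps_pair [simp]: "Cod K (Eps K [x, y]) = y"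
proof -
  have "is_path K [x, y]" using assms unfolding is_path_def by simp
  then show "Eps K [x, y] \<in> Mor K" "Dom K (Eps K [x, y]) = x" "Cod K (Eps K [x, y]) = y"
    using evaluation unfolding evaluation_map_def by simp_all
qed

lemma Eps_pair_self [simp]:
  assumes x: "x \<in> Obj K"
  shows "Eps K [x, x] = x"
proof -
  have "dup_step [x, x] [x]"
    unfolding dup_step_def by (rule exI[of _ "[]"]) simp
  then have "chain_equiv [x, x] [x]" unfolding chain_equiv_def by blast
  moreover have "is_path K [x, x]" "is_path K [x]"
    using x unfolding is_path_def pa_F_def by simp_all
  ultimately show ?thesis using evaluation x unfolding evaluation_map_def by metis
qed

lemma rrest_Eps_pair:
  assumes x: "x \<in> Obj K" and y: "y \<in> Obj K" and z: "z \<in> Obj K"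
    and F: "pa_F K x y" and zy: "pa_le K z y"
  shows "rrest K (Eps K [x, y]) z = Eps K [Delta K x z, z]"
proof (rule rrest_unique)
  have F': "pa_F K (Delta K x z) z" using F_restrict_right[OF x y z F zy] .
  have "path_le_r K [Delta K x z, z] [x, y]"
    unfolding path_le_r_def rrest_path_def using z zy by simp
  moreover have "is_path K [Delta K x z, z]" "is_path K [x, y]"
    using F F' x y z unfolding is_path_def by simp_all
  ultimately show "LeR K (Eps K [Delta K x z, z]) (Eps K [x, y])"
    using evaluation unfolding evaluation_map_def by blast
qed (use x y z F F_restrict_right[OF x y z F zy] in simp_all)

lemma lrest_Eps_pair:
  assumes x: "x \<in> Obj K" and y: "y \<in> Obj K" and z: "z \<in> Obj K"
    and F: "pa_F K x y" and zx: "pa_le K z x"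
  shows "lrest K z (Eps K [x, y]) = Eps K [z, Theta K y z]"
proof (rule lrest_unique)
  have F': "pa_F K z (Theta K y z)" using F_restrict_left[OF x y z F zx] .
  have "path_le_l K [z, Theta K y z] [x, y]"
    unfolding path_le_l_def lrest_path_def using z zx by simp
  moreover have "is_path K [z, Theta K y z]" "is_path K [x, y]"
    using F F' x y z unfolding is_path_def by simp_all
  ultimately show "LeL K (Eps K [z, Theta K y z]) (Eps K [x, y])"
    using evaluation unfolding evaluation_map_def by blast
qed (use x y z F F_restrict_left[OF x y z F zx] in simp_all)

lemma star_factors:
  assumes a: "a \<in> Mor K" and b: "b \<in> Mor K"
  defines "p' \<equiv> Delta K (Cod K a) (Dom K b)" and "q' \<equiv> Theta K (Dom K b) (Cod K a)"
  shows "star K a b = Comp K (Comp K (rrest K a p') (Eps K [p', q'])) (lrest K q' b)"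
    and "p' \<in> Obj K" "q' \<in> Obj K" "pa_le K p' (Cod K a)" "pa_le K q' (Dom K b)" "pa_F K p' q'"
  unfolding star_def Let_def p'_def q'_def
  using a b delta_le theta_le F_delta_theta by simp_all

lemma star_in [simp]: "a \<in> Mor K \<Longrightarrow> b \<in> Mor K \<Longrightarrow> star K a b \<in> Mor K"
  using star_factors[of a b] by simp

lemma dom_star:
  "a \<in> Mor K \<Longrightarrow> b \<in> Mor K \<Longrightarrow> Dom K (star K a b) = Dom K (rrest K a (Delta K (Cod K a) (Dom K b)))"
  using star_factors[of a b] by simp

lemma cod_star:
  "a \<in> Mor K \<Longrightarrow> b \<in> Mor K \<Longrightarrow> Cod K (star K a b) = Cod K (lrest K (Theta K (Dom K b) (Cod K a)) b)"
  using star_factors[of a b] by simp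

lemma dom_star_le: "a \<in> Mor K \<Longrightarrow> b \<in> Mor K \<Longrightarrow> pa_le K (Dom K (star K a b)) (Dom K a)"
  using star_factors[of a b] dom_star dom_rrest_le by simp

lemma cod_star_le: "a \<in> Mor K \<Longrightarrow> b \<in> Mor K \<Longrightarrow> pa_le K (Cod K (star K a b)) (Cod K b)"
  using star_factors[of a b] cod_star cod_lrest_le by simp

lemma star_eq_rrest_comp:
  assumes a: "a \<in> Mor K" and w: "w \<in> Mor K" and le: "pa_le K (Dom K w) (Cod K a)"
  shows "star K a w = Comp K (rrest K a (Dom K w)) w"
proof -
  have "Delta K (Cod K a) (Dom K w) = Dom K w" "Theta K (Dom K w) (Cod K a) = Dom K w"
    using delta_eq_if_le theta_below_eq le a w by simp_all
  then show ?thesis using star_factors(1)[OF a w] comp_cod[of "rrest K a (Dom K w)"] a w le by simp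
qed

lemma star_eq_comp_lrest:
  assumes w: "w \<in> Mor K" and b: "b \<in> Mor K" and le: "pa_le K (Cod K w) (Dom K b)"
  shows "star K w b = Comp K w (lrest K (Cod K w) b)"
proof -
  have "Delta K (Cod K w) (Dom K b) = Cod K w" "Theta K (Dom K b) (Cod K w) = Cod K w"
    using delta_below_eq theta_eq_if_le le w b by simp_all
  then show ?thesis using star_factors(1)[OF w b] w b le by simp
qed

lemma star_eq_comp:
  assumes "a \<in> Mor K" "b \<in> Mor K" "Cod K a = Dom K b"
  shows "star K a b = Comp K a b"
  using star_eq_rrest_comp[of a b] rrest_cod[of a] pa_le_refl[of "Dom K b"] assms by simp

lemma star_comp_left:
  assumes x: "x \<in> Mor K" and y: "y \<in> Mor K" and z: "z \<in> Mor K" and xy: "Cod K x = Dom K y"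
  shows "star K (Comp K x y) z = star K x (star K y z)"
proof -
  define p' where "p' = Delta K (Cod K y) (Dom K z)"
  define q' where "q' = Theta K (Dom K z) (Cod K y)"
  note yz = star_factors[OF y z, folded p'_def q'_def]
  let ?A = "rrest K y p'" and ?E = "Eps K [p', q']" and ?B = "lrest K q' z"
  let ?X = "rrest K x (Dom K ?A)"
  have dA: "pa_le K (Dom K ?A) (Cod K x)" using dom_rrest_le[of y p'] yz y xy by simp
  have "star K (Comp K x y) z = Comp K (Comp K (rrest K (Comp K x y) p') ?E) ?B"
    using star_factors(1)[of "Comp K x y" z] x y z xy unfolding p'_def q'_def by simp
  also have "rrest K (Comp K x y) p' = Comp K ?X ?A"
    using rrest_comp[OF x y xy] yz y by simp
  also have "Comp K (Comp K (Comp K ?X ?A) ?E) ?B = Comp K ?X (Comp K (Comp K ?A ?E) ?B)"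
    using x y z yz dA comp_assoc by simp
  also have "\<dots> = star K x (star K y z)"
    using star_eq_rrest_comp[of x "star K y z"] yz x y z dA by simp
  finally show ?thesis .
qed

lemma star_comp_right:
  assumes x: "x \<in> Mor K" and y: "y \<in> Mor K" and z: "z \<in> Mor K" and yz: "Cod K y = Dom K z"
  shows "star K x (Comp K y z) = star K (star K x y) z"
proof -
  define p' where "p' = Delta K (Cod K x) (Dom K y)"
  define q' where "q' = Theta K (Dom K y) (Cod K x)"
  note xy = star_factors[OF x y, folded p'_def q'_def]
  let ?A = "rrest K x p'" and ?E = "Eps K [p', q']" and ?B = "lrest K q' y"
  let ?Z = "lrest K (Cod K ?B) z"
  have cB: "pa_le K (Cod K ?B) (Dom K z)" using cod_lrest_le[of y q'] xy y yz by simp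
  have "star K x (Comp K y z) = Comp K (Comp K ?A ?E) (lrest K q' (Comp K y z))"
    using star_factors(1)[of x "Comp K y z"] x y z yz unfolding p'_def q'_def by simp
  also have "lrest K q' (Comp K y z) = Comp K ?B ?Z"
    using lrest_comp[OF y z yz] xy y by simp
  also have "Comp K (Comp K ?A ?E) (Comp K ?B ?Z) = Comp K (Comp K (Comp K ?A ?E) ?B) ?Z"
    using x y z xy cB comp_assoc by simp
  also have "\<dots> = star K (star K x y) z"
    using star_eq_comp_lrest[of "star K x y" z] xy x y z cB by simp
  finally show ?thesis .
qed

lemma star_obj_below:
  assumes p: "p \<in> Obj K" and q: "q \<in> Obj K" and qp: "pa_le K q p"
  shows "star K p q = q" and "star K q p = q"
  using star_eq_rrest_comp[of p q] rrest_obj[OF p q qp] star_eq_comp_lrest[of q p] lrest_obj[OF p q qp]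
    p q qp by simp_all

lemma star_dom_right: "u \<in> Mor K \<Longrightarrow> c \<in> Mor K \<Longrightarrow> star K (star K u (Dom K c)) c = star K u c"
  using star_comp_right[of u "Dom K c" c] by simp

lemma star_cod_left: "a \<in> Mor K \<Longrightarrow> u \<in> Mor K \<Longrightarrow> star K a (star K (Cod K a) u) = star K a u"
  using star_comp_left[of a "Cod K a" u] by simp

lemma star_lrest:
  assumes w: "w \<in> Mor K" and c: "c \<in> Mor K" and r: "r \<in> Obj K"
    and le: "pa_le K (Cod K w) r" "pa_le K r (Dom K c)"
  shows "star K w (lrest K r c) = star K w c"
proof -
  have "star K w (lrest K r c) = Comp K w (lrest K (Cod K w) (lrest K r c))"
    using star_eq_comp_lrest[of w "lrest K r c"] w c r le by simp
  also have "\<dots> = star K w c"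
    using lrest_lrest[OF c _ r le] star_eq_comp_lrest[OF w c] pa_le_trans[OF _ r _ le] w c by simp
  finally show ?thesis .
qed

lemma star_rrest:
  assumes a: "a \<in> Mor K" and w: "w \<in> Mor K" and r: "r \<in> Obj K"
    and le: "pa_le K (Dom K w) r" "pa_le K r (Cod K a)"
  shows "star K (rrest K a r) w = star K a w"
proof -
  have "star K (rrest K a r) w = Comp K (rrest K (rrest K a r) (Dom K w)) w"
    using star_eq_rrest_comp[of "rrest K a r" w] a w r le by simp
  also have "\<dots> = star K a w"
    using rrest_rrest[OF a _ r le] star_eq_rrest_comp[OF a w] pa_le_trans[OF _ r _ le] a w by simp
  finally show ?thesis .
qed

lemma star_assoc_of_dom_right:
  assumes x: "x \<in> Mor K" and b: "b \<in> Mor K" and c: "c \<in> Mor K"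
    and assoc: "star K (star K x b) (Dom K c) = star K x (star K b (Dom K c))"
  shows "star K (star K x b) c = star K x (star K b c)"
proof -
  define v where "v = star K b (Dom K c)"
  have v: "v \<in> Mor K" and cv: "pa_le K (Cod K v) (Dom K c)"
    using cod_star_le[of b "Dom K c"] b c unfolding v_def by simp_all
  have cxv: "pa_le K (Cod K (star K x v)) (Cod K v)" using cod_star_le x v by simp
  have "star K (star K x b) c = star K (star K x v) c"
    using star_dom_right[of "star K x b" c] assoc x b c unfolding v_def by simp
  also have "\<dots> = star K (star K x v) (lrest K (Cod K v) c)"
    using star_lrest[of "star K x v" c "Cod K v"] x v c cv cxv by simp
  also have "\<dots> = star K x (Comp K v (lrest K (Cod K v) c))"
    using star_comp_right[of x v "lrest K (Cod K v) c"] x v c cv by simp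
  also have "\<dots> = star K x (star K b c)"
    using star_eq_comp_lrest[OF v c cv] star_dom_right[OF b c] unfolding v_def by simp
  finally show ?thesis .
qed

lemma star_assoc_of_cod_left:
  assumes a: "a \<in> Mor K" and y: "y \<in> Mor K" and c: "c \<in> Mor K"
    and assoc: "star K (star K (Cod K a) y) c = star K (Cod K a) (star K y c)"
  shows "star K (star K a y) c = star K a (star K y c)"
proof -
  define u where "u = star K (Cod K a) y"
  have u: "u \<in> Mor K" and du: "pa_le K (Dom K u) (Cod K a)"
    using dom_star_le[of "Cod K a" y] a y unfolding u_def by simp_all
  have duc: "pa_le K (Dom K (star K u c)) (Dom K u)" using dom_star_le u c by simp
  have "star K a (star K y c) = star K a (star K u c)"
    using star_cod_left[of a "star K y c"] assoc a y c unfolding u_def by simp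
  also have "\<dots> = star K (rrest K a (Dom K u)) (star K u c)"
    using star_rrest[of a "star K u c" "Dom K u"] a u c du duc by simp
  also have "\<dots> = star K (Comp K (rrest K a (Dom K u)) u) c"
    using star_comp_left[of "rrest K a (Dom K u)" u c] a u c du by simp
  also have "\<dots> = star K (star K a y) c"
    using star_eq_rrest_comp[OF a u du] star_cod_left[OF a y] unfolding u_def by simp
  finally show ?thesis by simp
qed

lemma star_obj_mor:
  assumes p: "p \<in> Obj K" and b: "b \<in> Mor K"
  shows "star K p b = Comp K (Eps K [Delta K p (Dom K b), Theta K (Dom K b) p]) (lrest K (Theta K (Dom K b) p) b)"
  using star_factors[of p b] rrest_obj[of p "Delta K p (Dom K b)"] p b
    comp_ident_left[of "Eps K [Delta K p (Dom K b), Theta K (Dom K b) p]"] by simp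

lemma star_mor_obj:
  assumes b: "b \<in> Mor K" and s: "s \<in> Obj K"
  shows "star K b s = Comp K (rrest K b (Delta K (Cod K b) s)) (Eps K [Delta K (Cod K b) s, Theta K s (Cod K b)])"
  using star_factors[of b s] lrest_obj[of s "Theta K s (Cod K b)"] b s
    comp_ident_right[of "Comp K (rrest K b (Delta K (Cod K b) s)) (Eps K [Delta K (Cod K b) s, Theta K s (Cod K b)])"]
  by simp

end

locale evaluated_projection_cat = evaluated_weak_projection_cat +
  assumes projection: "projection_category K"
begin

lemma BigTheta_rrest:
  "a \<in> Mor K \<Longrightarrow> q \<in> Obj K \<Longrightarrow> pa_le K q (Cod K a) \<Longrightarrow> x \<in> Obj K \<Longrightarrow>
   BigTheta K (rrest K a q) x = Theta K q (BigTheta K a x)"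
  and BigDelta_lrest:
  "a \<in> Mor K \<Longrightarrow> p \<in> Obj K \<Longrightarrow> pa_le K p (Dom K a) \<Longrightarrow> x \<in> Obj K \<Longrightarrow>
   BigDelta K (lrest K p a) x = Delta K p (BigDelta K a x)"
  using projection unfolding projection_category_def by simp_all

lemma BigTheta_in [simp]: "a \<in> Mor K \<Longrightarrow> x \<in> Obj K \<Longrightarrow> BigTheta K a x \<in> Obj K"
  and BigDelta_in [simp]: "a \<in> Mor K \<Longrightarrow> x \<in> Obj K \<Longrightarrow> BigDelta K a x \<in> Obj K"
  unfolding BigTheta_def BigDelta_def using theta_le delta_le by simp_all

lemma star_star_obj_eq_lam:
  assumes p: "p \<in> Obj K" and b: "b \<in> Mor K" and s: "s \<in> Obj K"
  shows "star K (star K p b) s = lam K p b s"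
proof -
  define q1 where "q1 = Theta K (Dom K b) p"
  define x where "x = BigDelta K b s"
  define t where "t = BigTheta K b p"
  define b1 where "b1 = lrest K q1 b"
  define e1 where "e1 = Delta K q1 x"
  define f1 where "f1 = Delta K t s"
  define E0 where "E0 = Eps K [Delta K p (Dom K b), q1]"
  have q1: "q1 \<in> Obj K" "pa_le K q1 (Dom K b)" using theta_le p b unfolding q1_def by simp_all
  have F0: "pa_F K (Delta K p (Dom K b)) q1" using F_delta_theta p b unfolding q1_def by simp
  have b1: "b1 \<in> Mor K" "Dom K b1 = q1" "Cod K b1 = t"
    using b q1 unfolding b1_def t_def BigTheta_def q1_def by simp_all
  have t: "t \<in> Obj K" and f1: "f1 \<in> Obj K" "pa_le K f1 t"
    using b p s delta_le unfolding t_def f1_def by simp_all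
  have x: "x \<in> Obj K" "pa_le K x (Dom K b)"
    using dom_rrest_le[of b "Delta K (Cod K b) s"] b s delta_le unfolding x_def BigDelta_def by simp_all
  have E0: "E0 \<in> Mor K" "Cod K E0 = q1" using F0 p b q1 unfolding E0_def by simp_all
  have "Dom K (rrest K b1 f1) = BigDelta K b1 s" using b1(3) unfolding BigDelta_def f1_def by simp
  then have e1: "Dom K (rrest K b1 f1) = e1"
    using BigDelta_lrest[of b q1 s] b q1 s unfolding b1_def e1_def x_def by simp
  have "star K (star K p b) s = Comp K (rrest K (Comp K E0 b1) f1) (Eps K [f1, Theta K s t])"
    using star_obj_mor[OF p b] star_mor_obj[of "Comp K E0 b1" s] E0 b1 s
    unfolding E0_def b1_def q1_def f1_def by simp
  also have "rrest K (Comp K E0 b1) f1 = Comp K (rrest K E0 e1) (rrest K b1 f1)"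
    using rrest_comp[of E0 b1 f1] E0 b1 f1 e1 by simp
  also have "rrest K E0 e1 = Eps K [Delta K p x, e1]"
    using rrest_Eps_pair[OF _ q1(1) _ F0, of e1] delta_via_F_pair[OF p _ x] delta_le p b x q1
    unfolding E0_def e1_def q1_def by simp
  finally show ?thesis
    unfolding lam_def Let_def q1_def x_def t_def b1_def e1_def f1_def by simp
qed

lemma star_obj_star_eq_rho:
  assumes p: "p \<in> Obj K" and b: "b \<in> Mor K" and s: "s \<in> Obj K"
  shows "star K p (star K b s) = rho K p b s"
proof -
  define r' where "r' = Delta K (Cod K b) s"
  define g where "g = Theta K s (Cod K b)"
  define x where "x = BigDelta K b s"
  define t where "t = BigTheta K b p"
  define b2 where "b2 = rrest K b r'"
  define e2 where "e2 = Theta K x p"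
  define f2 where "f2 = Theta K r' t"
  define E1 where "E1 = Eps K [r', g]"
  have r': "r' \<in> Obj K" "pa_le K r' (Cod K b)" using delta_le b s unfolding r'_def by simp_all
  have F1: "pa_F K r' g" using F_delta_theta b s unfolding r'_def g_def by simp
  have b2: "b2 \<in> Mor K" "Dom K b2 = x" "Cod K b2 = r'"
    using b r' unfolding b2_def x_def BigDelta_def r'_def by simp_all
  have x: "x \<in> Obj K" and t: "t \<in> Obj K" "pa_le K t (Cod K b)"
    using cod_lrest_le[of b "Theta K (Dom K b) p"] b p s theta_le
    unfolding x_def t_def BigTheta_def by simp_all
  have e2: "e2 \<in> Obj K" "pa_le K e2 x" and f2: "f2 \<in> Obj K" "pa_le K f2 r'"
    using theta_le p x r' t unfolding e2_def f2_def by simp_all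
  have E1: "E1 \<in> Mor K" "Dom K E1 = r'" using F1 r' b s unfolding E1_def g_def by simp_all
  have "Cod K (lrest K e2 b2) = BigTheta K b2 p" using b2(2) unfolding BigTheta_def e2_def by simp
  then have cb2: "Cod K (lrest K e2 b2) = f2"
    using BigTheta_rrest[of b r' p] b r' p unfolding b2_def f2_def t_def by simp
  have F2: "pa_F K f2 (Theta K s t)"
    using F_restrict_left[OF r'(1) _ f2(1) F1 f2(2)] theta_via_F_pair[OF _ s t] b s
    unfolding g_def f2_def r'_def by simp
  have "star K p (star K b s) = Comp K (Eps K [Delta K p x, e2]) (lrest K e2 (Comp K b2 E1))"
    using star_mor_obj[OF b s] star_obj_mor[of p "Comp K b2 E1"] p b2 E1
    unfolding b2_def r'_def g_def E1_def e2_def by simp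
  also have "lrest K e2 (Comp K b2 E1) = Comp K (lrest K e2 b2) (lrest K f2 E1)"
    using lrest_comp[of b2 E1 e2] b2 E1 e2 cb2 by simp
  also have "lrest K f2 E1 = Eps K [f2, Theta K s t]"
    using lrest_Eps_pair[OF r'(1) _ f2(1) F1 f2(2)] theta_via_F_pair[OF _ s t] b s
    unfolding E1_def g_def f2_def r'_def by simp
  also have "Comp K (Eps K [Delta K p x, e2]) (Comp K (lrest K e2 b2) (Eps K [f2, Theta K s t]))
      = Comp K (Comp K (Eps K [Delta K p x, e2]) (lrest K e2 b2)) (Eps K [f2, Theta K s t])"
    using comp_assoc[of "Eps K [Delta K p x, e2]" "lrest K e2 b2" "Eps K [f2, Theta K s t]"]
      F_delta_theta[OF p x] F2 b2 e2 f2 cb2 p s t x unfolding e2_def by simp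
  finally show ?thesis
    unfolding rho_def Let_def x_def e2_def b2_def f2_def r'_def t_def .
qed

end

locale chained_projection_cat =
  fixes K :: "('m, 'z) cpc_scheme"
  assumes chained: "chained_projection_category K"

sublocale chained_projection_cat \<subseteq> evaluated_projection_cat
  using chained unfolding chained_projection_category_def
  by unfold_locales (auto simp: projection_category_def)

context chained_projection_cat
begin

lemma lam_eq_rho: "b \<in> Mor K \<Longrightarrow> p \<in> Obj K \<Longrightarrow> s \<in> Obj K \<Longrightarrow> lam K p b s = rho K p b s"
  using chained unfolding chained_projection_category_def by blast

lemma star_assoc_obj_mor_obj:
  "p \<in> Obj K \<Longrightarrow> b \<in> Mor K \<Longrightarrow> s \<in> Obj K \<Longrightarrow> star K (star K p b) s = star K p (star K b s)"
  using star_star_obj_eq_lam star_obj_star_eq_rho lam_eq_rho by simp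

lemma star_assoc:
  assumes "a \<in> Mor K" "b \<in> Mor K" "c \<in> Mor K"
  shows "star K (star K a b) c = star K a (star K b c)"
proof (rule star_assoc_of_cod_left[OF assms])
  show "star K (star K (Cod K a) b) c = star K (Cod K a) (star K b c)"
    using assms star_assoc_of_dom_right[of "Cod K a" b c] star_assoc_obj_mor_obj[of "Cod K a" b "Dom K c"]
    by simp
qed

end

theorem theorem6p5:
  fixes K :: "'m cpc"
  assumes "chained_projection_category K"
  shows "drc_semigroup (Mor K) (star K) (Dom K) (Cod K)"
proof -
  interpret chained_projection_cat K by (rule chained_projection_cat.intro) (rule assms)
  show ?thesis
    unfolding drc_semigroup_def
  proof (intro conjI ballI)
    fix a b assume ab: "a \<in> Mor K" "b \<in> Mor K"
    show "Dom K (star K a b) = Dom K (star K a (Dom K b))"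
      and "Cod K (star K a b) = Cod K (star K (Cod K a) b)"
      using dom_star cod_star ab by simp_all
    show "Dom K (star K a b) = star K (star K (Dom K a) (Dom K (star K a b))) (Dom K a)"
      and "Cod K (star K a b) = star K (star K (Cod K b) (Cod K (star K a b))) (Cod K b)"
      using star_obj_below dom_star_le[OF ab] cod_star_le[OF ab] ab by simp_all
  qed (simp_all add: star_assoc star_eq_comp)
qed

end
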